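(* Let $p=2$ and $n\geq 1$. The $E_2$-term $E_2^{*,*,*}S(n,n)$ of the May spectral sequence for $S(n,n)$ is isomorphic to the tensor product of $E[h_{s,j}\mid n<s<2n,\ j\in\mathbb{Z}/n]$ and $E[h_{n,j},\rho_{2n}\mid j\in\mathbb{Z}/n]\otimes P[h_{n,n-1}]$, where $\rho_{2n}=\sum_{0\leq j<n}h_{2n,j}$ and $h_{n,j}^2=h_{n,n-1}^2$.
   Context: At $p=2$, $S(n,n)=\mathbb{Z}/2[t_n,t_{n+1},\dots]/(t_s^{2^n}-t_s)$ is the Hopf algebra with coproduct $\Delta(t_s)=1\otimes t_s+\sum_{n\leq i\leq s-n}t_i\otimes t_{s-i}^{2^i}+t_s\otimes1$ for $s\leq 2n-1$ and the same minus $t_{s-n}^{2^{n-1}}\otimes t_{s-n}^{2^{n-1}}$ for $s\geq 2n$. May filtration: $M(t_s^{2^j})=2s-1$ for $n\le s\le 2n-1$, $M(t_s^{2^j})=\max\{2s-1,2M(t_{s-n}^{2^{j+n-1}})+1\}$ for $s\ge 2n$, extended to monomials by $M(t_s^{\sum j_i2^i})=\sum j_iM(t_s^{2^i})$ and additively over distinct $t_s$, and to cobar elements by $M([\alpha_1|\cdots|\alpha_s])=\sum M(\alpha_i)$; the resulting May spectral sequence $E_r^{s,t,M}S(n,n)$ converges to $\mathrm{Ext}_{S(n,n)}(\mathbb{Z}/2,\mathbb{Z}/2)$, and $h_{i,j}$ ($i\ge n$, $j\in\mathbb{Z}/n$) denotes the class in $E_1$ of $[t_i^{2^j}]$. Its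 $E_2$-term is the cohomology of $P[h_{n,j}\mid j\in\mathbb{Z}/n]\otimes E[h_{s,j}\mid n<s\leq 2n,\ j\in\mathbb{Z}/n]$ with the only nontrivial differentials on generators $d_1(h_{2n,j})=h_{n,j-1}^2+h_{n,j}^2$. *)

theory Defs
  imports "HOL-Library.Poly_Mapping" "HOL-Library.Z2"
begin

text \<open>Polynomial ring over F_2 in variables indexed by pairs (s,j) of naturals.\<close>

type_synonym mon = "(nat \<times> nat) \<Rightarrow>\<^sub>0 nat"
type_synonym pol = "mon \<Rightarrow>\<^sub>0 bit"

definition var :: "nat \<times> nat \<Rightarrow> pol" where
  "var v = Poly_Mapping.single (Poly_Mapping.single v 1) 1"

definition ideal_gen :: "'a::comm_ring_1 set \<Rightarrow> 'a set" where
  "ideal_gen G = {x. \<exists>S f. finite S \<and> S \<subseteq> G \<and> x = (\<Sum>g\<in>S. f g * g)}"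

text \<open>Indices j in Z/n are represented by 0..<n; predecessor j-1 mod n.\<close>
definition prev :: "nat \<Rightarrow> nat \<Rightarrow> nat" where
  "prev n j = (j + n - 1) mod n"

text \<open>The complex computing E_2: P[h_{n,j}] (x) E[h_{s,j} | n<s<=2n], j in Z/n,
  realised as the polynomial ring pol modulo the ideal I_D generated by all variables
  outside this generating set and by the squares of the exterior generators
  (exterior algebra over F_2 = polynomial algebra modulo squares).\<close>

definition gensD :: "nat \<Rightarrow> (nat \<times> nat) set" where
  "gensD n = {(s, j). n \<le> s \<and> s \<le> 2 * n \<and> j < n}"

definition ID :: "nat \<Rightarrow> pol set" where
  "ID n = ideal_gen ({var v | v. v \<notin> gensD n} \<union>
                     {var (s, j) ^ 2 | s j. n < s \<and> s \<le> 2 * n \<and> j < n})"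

definition dgen :: "nat \<Rightarrow> nat \<times> nat \<Rightarrow> pol" where
  "dgen n v = (if fst v = 2 * n \<and> snd v < n
               then var (n, prev n (snd v)) ^ 2 + var (n, snd v) ^ 2 else 0)"

text \<open>The derivation extending dgen (signs are irrelevant in characteristic 2).\<close>
definition dmon :: "nat \<Rightarrow> mon \<Rightarrow> pol" where
  "dmon n m = (\<Sum>v\<in>Poly_Mapping.keys m.
      of_nat (Poly_Mapping.lookup m v) * Poly_Mapping.single (m - Poly_Mapping.single v 1) 1 * dgen n v)"

definition dd :: "nat \<Rightarrow> pol \<Rightarrow> pol" where
  "dd n p = (\<Sum>m\<in>Poly_Mapping.keys p.
      Poly_Mapping.single 0 (Poly_Mapping.lookup p m) * dmon n m)"

text \<open>Cycles and boundaries (as subsets of pol, modulo ID): the E_2 term is ZD / BD.\<close>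
definition ZD :: "nat \<Rightarrow> pol set" where
  "ZD n = {x. dd n x \<in> ID n}"

definition BD :: "nat \<Rightarrow> pol set" where
  "BD n = {dd n y + i | y i. i \<in> ID n}"

text \<open>The claimed algebra E[h_{s,j} | n<s<2n] (x) E[h_{n,j}, rho] (x) P[h_{n,n-1}] with
  h_{n,j}^2 = h_{n,n-1}^2, realised as pol modulo the ideal JA.\<close>

definition rho_var :: "nat \<Rightarrow> nat \<times> nat" where
  "rho_var n = (2 * n, 0)"

definition gensA :: "nat \<Rightarrow> (nat \<times> nat) set" where
  "gensA n = {(s, j). n \<le> s \<and> s < 2 * n \<and> j < n} \<union> {rho_var n}"

definition JA :: "nat \<Rightarrow> pol set" where
  "JA n = ideal_gen ({var v | v. v \<notin> gensA n}
             \<union> {var (s, j) ^ 2 | s j. n < s \<and> s < 2 * n \<and> j < n}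
             \<union> {var (rho_var n) ^ 2}
             \<union> {var (n, j) ^ 2 - var (n, n - 1) ^ 2 | j. j < n})"

text \<open>The isomorphism statement: a ring homomorphism phi : pol -> pol with
  phi(h_{s,j}) = h_{s,j} (n<=s<2n) and phi(rho) = sum_j h_{2n,j}, landing in cycles,
  whose induced map pol/JA -> ZD/BD is well defined, injective and surjective.\<close>

definition E2_iso :: "nat \<Rightarrow> (pol \<Rightarrow> pol) \<Rightarrow> bool" where
  "E2_iso n \<phi> \<longleftrightarrow>
     (\<forall>x y. \<phi> (x + y) = \<phi> x + \<phi> y) \<and> (\<forall>x y. \<phi> (x * y) = \<phi> x * \<phi> y) \<and> \<phi> 1 = 1 \<and>
     (\<forall>s j. n \<le> s \<and> s < 2 * n \<and> j < n \<longrightarrow> \<phi> (var (s, j)) = var (s, j)) \<and>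
     \<phi> (var (rho_var n)) = (\<Sum>j<n. var (2 * n, j)) \<and>
     (\<forall>x. \<phi> x \<in> ZD n) \<and>
     (\<forall>x. \<phi> x \<in> BD n \<longleftrightarrow> x \<in> JA n) \<and>
     (\<forall>z\<in>ZD n. \<exists>x. \<phi> x - z \<in> BD n)"

end

theory Submission
  imports Defs
begin

text \<open>Write x_j = h_{n,j} and y_j = h_{2n,j}. The generators h_{s,j} with n < s < 2n are cycles
  that just come along, so everything happens in P[x_j] (x) E[y_j] with d y_j = x_{j-1}^2 + x_j^2.
  The substitution x_0 -> x_{n-1}, x_j -> x_{j-1} + x_j, y_0 -> rho = sum_j y_j, y_j -> y_j (0 < j < n)
  is an automorphism conjugating d to the split differential d y_0 = 0, d y_j = x_j^2 (0 < j < n).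
  The latter is contracted onto the monomials containing no x_k^2 and no y_k (k > 0) by the homotopy
  that trades x_k^2 for y_k at the least such k; this gives surjectivity.
  For injectivity, the projection onto the monomials without y_j (j > 0) and with y_0 at most once
  sends boundaries into JA and inverts phi modulo JA.\<close>

section \<open>Polynomials over Z/2\<close>

lemma bit_add_self [simp]: "(c::bit) + c = 0"
  by (cases c) auto

lemma pol_add_self [simp]: "(p::pol) + p = 0"
  by (rule poly_mapping_eqI) (simp only: lookup_add bit_add_self lookup_zero)

lemma pol_diff_eq_add: "(p::pol) - q = p + q"
proof -
  have "p - q = p - q + (q + q)" by (simp only: pol_add_self add_0_right)
  also have "\<dots> = p + q" by (simp only: add.assoc[symmetric] diff_add_cancel)
  finally show ?thesis .
qed

lemma pol_two [simp]: "(2::pol) = 0"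
  by (metis one_add_one pol_add_self)

lemma pol_square_add: "((a::pol) + b) ^ 2 = a ^ 2 + b ^ 2"
  by (simp add: power2_eq_square algebra_simps)

lemma pol_square_sum: "(sum (g :: 'a \<Rightarrow> pol) S) ^ 2 = (\<Sum>i\<in>S. g i ^ 2)"
  by (induction S rule: infinite_finite_induct) (auto simp: pol_square_add)

lemma pol_sum_telescope:
  "(j::nat) \<le> k \<Longrightarrow> (\<Sum>i\<in>{j+1..k}. (g (i - 1) + g i :: pol)) = g j + g k"
proof (induction k rule: dec_induct)
  case (step k)
  have "{j+1..Suc k} = insert (Suc k) {j+1..k}" using step by auto
  then show ?case using step by (simp add: algebra_simps)
qed simp

lemma pol_of_nat: "(of_nat c :: pol) = (if odd c then 1 else 0)"
  by (induction c) auto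

definition monom :: "mon \<Rightarrow> pol" where
  "monom m = Poly_Mapping.single m 1"

lemma keys_monom [simp]: "Poly_Mapping.keys (monom m) = {m}"
  by (simp add: monom_def)

lemma monom_add: "monom (a + b) = monom a * monom b"
  by (simp add: monom_def mult_single)

lemma monom_0: "monom 0 = 1"
  by (simp add: monom_def)

lemma monom_sum: "monom (sum g S) = (\<Prod>x\<in>S. monom (g x))"
  by (induction S rule: infinite_finite_induct) (auto simp: monom_0 monom_add)

lemma var_eq_monom: "var v = monom (Poly_Mapping.single v 1)"
  by (simp add: var_def monom_def)

lemma monom_single: "monom (Poly_Mapping.single v k) = var v ^ k"
proof (induction k)
  case (Suc k)
  have "Poly_Mapping.single v (Suc k) = Poly_Mapping.single v 1 + Poly_Mapping.single v k"
    by (simp add: single_add[symmetric])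
  then show ?case by (simp only: monom_add Suc.IH var_eq_monom power_Suc)
qed (simp add: monom_0)

lemma pol_eq_sum_monom: "(p::pol) = (\<Sum>m\<in>Poly_Mapping.keys p. monom m)"
proof (rule poly_mapping_eqI)
  fix k
  show "Poly_Mapping.lookup p k = Poly_Mapping.lookup (\<Sum>m\<in>Poly_Mapping.keys p. monom m) k"
    unfolding lookup_sum monom_def lookup_single
    by (cases "k \<in> Poly_Mapping.keys p") (auto simp: when_def in_keys_iff)
qed

lemma mon_eq_sum_single:
  "(m::mon) = (\<Sum>v\<in>Poly_Mapping.keys m. Poly_Mapping.single v (Poly_Mapping.lookup m v))"
proof (rule poly_mapping_eqI)
  fix k
  show "Poly_Mapping.lookup m k = Poly_Mapping.lookup
      (\<Sum>v\<in>Poly_Mapping.keys m. Poly_Mapping.single v (Poly_Mapping.lookup m v)) k"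
    unfolding lookup_sum lookup_single
    by (cases "k \<in> Poly_Mapping.keys m") (auto simp: when_def in_keys_iff)
qed

lemma keys_add_mon: "Poly_Mapping.keys (a + b :: mon) = Poly_Mapping.keys a \<union> Poly_Mapping.keys b"
  by (auto simp: in_keys_iff lookup_add)

lemma mon_split:
  assumes "k \<le> Poly_Mapping.lookup (m::mon) v"
  shows "m = (m - Poly_Mapping.single v k) + Poly_Mapping.single v k"
proof (rule poly_mapping_eqI)
  fix w
  show "Poly_Mapping.lookup m w = Poly_Mapping.lookup (m - Poly_Mapping.single v k + Poly_Mapping.single v k) w"
    using assms by (cases "w = v") (simp_all add: lookup_add lookup_minus lookup_single when_def)
qed

lemma monom_split:
  "k \<le> Poly_Mapping.lookup m v \<Longrightarrow> monom m = monom (m - Poly_Mapping.single v k) * var v ^ k"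
  using mon_split[of k m v] by (metis monom_add monom_single)

definition lin_ext :: "(mon \<Rightarrow> pol) \<Rightarrow> pol \<Rightarrow> pol" where
  "lin_ext F p = (\<Sum>m\<in>Poly_Mapping.keys p. F m)"

lemma lin_ext_add: "lin_ext F (p + q) = lin_ext F p + lin_ext F q"
proof -
  define f where "f k (c::bit) = (if c = 0 then 0 else F k)" for k c
  have "lin_ext F r = (\<Sum>k\<in>Poly_Mapping.keys r. f k (Poly_Mapping.lookup r k))" for r
    unfolding lin_ext_def f_def by (rule sum.cong) (auto simp: in_keys_iff)
  then show ?thesis
    by (simp only:) (rule setsum_keys_plus_distrib, auto simp: f_def)
qed

lemma lin_ext_0 [simp]: "lin_ext F 0 = 0"
  by (simp add: lin_ext_def)

lemma lin_ext_monom [simp]: "lin_ext F (monom m) = F m"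
  by (simp add: lin_ext_def)

lemma lin_ext_sum: "lin_ext F (sum g S) = (\<Sum>x\<in>S. lin_ext F (g x))"
  by (induction S rule: infinite_finite_induct) (auto simp: lin_ext_add)

lemma lin_ext_mult:
  "lin_ext F (p * q) = (\<Sum>a\<in>Poly_Mapping.keys p. \<Sum>b\<in>Poly_Mapping.keys q. F (a + b))"
proof -
  have "p * q = (\<Sum>a\<in>Poly_Mapping.keys p. monom a) * (\<Sum>b\<in>Poly_Mapping.keys q. monom b)"
    using pol_eq_sum_monom[of p] pol_eq_sum_monom[of q] by simp
  also have "\<dots> = (\<Sum>a\<in>Poly_Mapping.keys p. \<Sum>b\<in>Poly_Mapping.keys q. monom (a + b))"
    by (simp add: sum_product monom_add)
  finally show ?thesis by (simp add: lin_ext_sum)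
qed

definition pol_hom :: "(pol \<Rightarrow> pol) \<Rightarrow> bool" where
  "pol_hom f \<longleftrightarrow> (\<forall>x y. f (x + y) = f x + f y) \<and> (\<forall>x y. f (x * y) = f x * f y) \<and> f 1 = 1"

lemma pol_hom_add: "pol_hom f \<Longrightarrow> f (x + y) = f x + f y"
  and pol_hom_mult: "pol_hom f \<Longrightarrow> f (x * y) = f x * f y"
  and pol_hom_1: "pol_hom f \<Longrightarrow> f 1 = 1"
  by (simp_all add: pol_hom_def)

lemma pol_hom_0: "pol_hom f \<Longrightarrow> f 0 = 0"
  using pol_hom_add[of f 0 0] by simp

lemma pol_hom_power: "pol_hom f \<Longrightarrow> f (x ^ k) = f x ^ k"
  by (induction k) (auto simp: pol_hom_1 pol_hom_mult)

lemma pol_hom_sum: "pol_hom f \<Longrightarrow> f (sum g S) = (\<Sum>x\<in>S. f (g x))"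
  by (induction S rule: infinite_finite_induct) (auto simp: pol_hom_0 pol_hom_add)

lemma pol_hom_prod: "pol_hom f \<Longrightarrow> f (prod g S) = (\<Prod>x\<in>S. f (g x))"
  by (induction S rule: infinite_finite_induct) (auto simp: pol_hom_1 pol_hom_mult)

lemma pol_hom_comp: "pol_hom f \<Longrightarrow> pol_hom g \<Longrightarrow> pol_hom (f \<circ> g)"
  by (simp add: pol_hom_def)

lemma pol_hom_lin_ext:
  assumes "\<And>a b. F (a + b) = F a * F b" and "F 0 = 1"
  shows "pol_hom (lin_ext F)"
  unfolding pol_hom_def
proof (intro conjI allI)
  fix x y
  show "lin_ext F (x * y) = lin_ext F x * lin_ext F y"
    unfolding lin_ext_mult assms(1) unfolding lin_ext_def sum_product ..
next
  fix x y
  show "lin_ext F (x + y) = lin_ext F x + lin_ext F y" by (rule lin_ext_add)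
qed (simp add: lin_ext_def assms)

definition eval_mon :: "(nat \<times> nat \<Rightarrow> pol) \<Rightarrow> mon \<Rightarrow> pol" where
  "eval_mon F m = (\<Prod>v\<in>Poly_Mapping.keys m. F v ^ Poly_Mapping.lookup m v)"

definition subst :: "(nat \<times> nat \<Rightarrow> pol) \<Rightarrow> pol \<Rightarrow> pol" where
  "subst F = lin_ext (eval_mon F)"

lemma eval_mon_superset:
  assumes "finite K" "Poly_Mapping.keys m \<subseteq> K"
  shows "eval_mon F m = (\<Prod>v\<in>K. F v ^ Poly_Mapping.lookup m v)"
  unfolding eval_mon_def
  by (rule prod.mono_neutral_left) (use assms in \<open>auto simp: in_keys_iff\<close>)

lemma eval_mon_add: "eval_mon F (a + b) = eval_mon F a * eval_mon F b"
proof -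
  let ?K = "Poly_Mapping.keys a \<union> Poly_Mapping.keys b"
  have "eval_mon F (a + b) = (\<Prod>v\<in>?K. F v ^ Poly_Mapping.lookup (a + b) v)"
    by (rule eval_mon_superset) (auto simp: keys_add_mon)
  also have "\<dots> = (\<Prod>v\<in>?K. F v ^ Poly_Mapping.lookup a v) * (\<Prod>v\<in>?K. F v ^ Poly_Mapping.lookup b v)"
    by (simp add: lookup_add power_add prod.distrib)
  also have "\<dots> = eval_mon F a * eval_mon F b"
    by (simp add: eval_mon_superset[symmetric])
  finally show ?thesis .
qed

lemma monom_eq_eval_mon: "monom m = eval_mon var m"
  by (subst mon_eq_sum_single) (simp add: monom_sum monom_single eval_mon_def)

lemma pol_hom_subst: "pol_hom (subst F)"
  unfolding subst_def by (rule pol_hom_lin_ext) (simp_all add: eval_mon_add eval_mon_def[of _ 0])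

lemma subst_var [simp]: "subst F (var v) = F v"
  by (simp add: subst_def var_eq_monom eval_mon_def)

lemma subst_monom: "subst F (monom m) = eval_mon F m"
  by (simp add: subst_def)

lemma pol_induct [case_names zero one var add mult]:
  assumes "P 0" "P 1" "\<And>v. P (var v)" "\<And>x y. P x \<Longrightarrow> P y \<Longrightarrow> P (x + y)"
    "\<And>x y. P x \<Longrightarrow> P y \<Longrightarrow> P (x * y)"
  shows "P p"
proof -
  have power: "P (x ^ k)" if "P x" for x k
    using that by (induction k) (auto intro: assms)
  have prod: "P (prod g S)" if "\<And>x. P (g x)" for g and S :: "'a set"
    using that by (induction S rule: infinite_finite_induct) (auto intro: assms)
  have sum: "P (sum g S)" if "\<And>x. P (g x)" for g and S :: "'a set"
    using that by (induction S rule: infinite_finite_induct) (auto intro: assms)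
  have "P (monom m)" for m
    unfolding monom_eq_eval_mon eval_mon_def by (intro prod power assms)
  then have "P (\<Sum>m\<in>Poly_Mapping.keys p. monom m)" by (intro sum)
  then show ?thesis using pol_eq_sum_monom[of p] by simp
qed

lemma pol_hom_eqI:
  assumes "pol_hom f" "pol_hom g" "\<And>v. f (var v) = g (var v)"
  shows "f p = g p"
  by (induction p rule: pol_induct) (use assms in \<open>auto simp: pol_hom_0 pol_hom_1 pol_hom_add pol_hom_mult\<close>)

lemma subst_subst: "subst F (subst G p) = subst (\<lambda>v. subst F (G v)) p"
  by (rule pol_hom_eqI[where f = "subst F \<circ> subst G", simplified]) (auto intro: pol_hom_comp pol_hom_subst)

lemma subst_var_id [simp]: "subst var p = p"
  using pol_hom_eqI[OF pol_hom_subst, of id] by (simp add: pol_hom_def)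

section \<open>Ideals generated by a set\<close>

lemma ideal_gen_0: "0 \<in> ideal_gen G"
  unfolding ideal_gen_def by (rule CollectI, rule exI[of _ "{}"]) auto

lemma ideal_gen_gen: "g \<in> G \<Longrightarrow> g \<in> ideal_gen G"
  unfolding ideal_gen_def by (rule CollectI, rule exI[of _ "{g}"], rule exI[of _ "\<lambda>_. 1"]) auto

lemma ideal_gen_mult_left: "x \<in> ideal_gen G \<Longrightarrow> r * x \<in> ideal_gen G"
proof -
  assume "x \<in> ideal_gen G"
  then obtain S f where S: "finite S" "S \<subseteq> G" "x = (\<Sum>g\<in>S. f g * g)"
    unfolding ideal_gen_def by auto
  then have "r * x = (\<Sum>g\<in>S. (r * f g) * g)" by (simp add: sum_distrib_left mult.assoc)
  with S show ?thesis unfolding ideal_gen_def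
    by (intro CollectI exI[of _ S] exI[of _ "\<lambda>g. r * f g"]) simp
qed

lemma ideal_gen_mult_right: "x \<in> ideal_gen G \<Longrightarrow> x * r \<in> ideal_gen G"
  using ideal_gen_mult_left[of x G r] by (simp add: mult.commute)

lemma ideal_gen_add:
  assumes "x \<in> ideal_gen G" "y \<in> ideal_gen G"
  shows "x + y \<in> ideal_gen G"
proof -
  obtain S f T h where S: "finite S" "S \<subseteq> G" "x = (\<Sum>g\<in>S. f g * g)"
    and T: "finite T" "T \<subseteq> G" "y = (\<Sum>g\<in>T. h g * g)"
    using assms unfolding ideal_gen_def by auto
  define k where "k g = (if g \<in> S then f g else 0) + (if g \<in> T then h g else 0)" for g
  have "(\<Sum>g\<in>S \<union> T. k g * g)
      = (\<Sum>g\<in>S \<union> T. if g \<in> S then f g * g else 0) + (\<Sum>g\<in>S \<union> T. if g \<in> T then h g * g else 0)"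
    unfolding k_def distrib_right sum.distrib[symmetric] by (rule sum.cong) auto
  also have "\<dots> = x + y"
    using S T by (simp add: sum.If_cases Int_absorb1 Int_absorb2)
  finally show ?thesis using S T unfolding ideal_gen_def
    by (intro CollectI exI[of _ "S \<union> T"] exI[of _ k]) simp
qed

lemma ideal_gen_sum: "(\<And>i. i \<in> I \<Longrightarrow> g i \<in> ideal_gen G) \<Longrightarrow> sum g I \<in> ideal_gen G"
  by (induction I rule: infinite_finite_induct) (auto intro: ideal_gen_add ideal_gen_0)

lemma ideal_gen_induct [consumes 1, case_names zero add gen]:
  assumes "x \<in> ideal_gen G" "P 0" "\<And>a b. P a \<Longrightarrow> P b \<Longrightarrow> P (a + b)"
    "\<And>r g. g \<in> G \<Longrightarrow> P (r * g)"
  shows "P x"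
proof -
  obtain S f where S: "finite S" "S \<subseteq> G" "x = (\<Sum>g\<in>S. f g * g)"
    using assms(1) unfolding ideal_gen_def by auto
  have "P (\<Sum>g\<in>S. f g * g)" using S(1,2)
    by (induction S rule: finite_induct) (auto intro: assms)
  then show ?thesis using S by simp
qed

lemma ideal_gen_diff_mult:
  "a - b \<in> ideal_gen G \<Longrightarrow> c - d \<in> ideal_gen G \<Longrightarrow> a * c - b * d \<in> ideal_gen G"
proof -
  assume "a - b \<in> ideal_gen G" "c - d \<in> ideal_gen G"
  moreover have "a * c - b * d = (a - b) * c + b * (c - d)" by (simp add: algebra_simps)
  ultimately show ?thesis by (simp add: ideal_gen_add ideal_gen_mult_left ideal_gen_mult_right)
qed

lemma ideal_gen_diff_power: "a - b \<in> ideal_gen G \<Longrightarrow> a ^ k - b ^ k \<in> ideal_gen G"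
  by (induction k) (auto simp: ideal_gen_0 ideal_gen_diff_mult)

lemma ideal_gen_diff_prod:
  "(\<And>i. i \<in> I \<Longrightarrow> a i - b i \<in> ideal_gen G) \<Longrightarrow> prod a I - prod b I \<in> ideal_gen G"
  by (induction I rule: infinite_finite_induct) (auto simp: ideal_gen_0 ideal_gen_diff_mult)

lemma pol_hom_ideal_gen:
  assumes "pol_hom f" "x \<in> ideal_gen G" "\<And>g. g \<in> G \<Longrightarrow> f g \<in> ideal_gen H"
  shows "f x \<in> ideal_gen H"
  using assms(2) by (induction rule: ideal_gen_induct)
    (auto simp: pol_hom_0[OF assms(1)] pol_hom_add[OF assms(1)] pol_hom_mult[OF assms(1)]
      intro: ideal_gen_0 ideal_gen_add ideal_gen_mult_left assms(3))

lemma pol_hom_monom_diff_ideal_gen: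
  assumes "pol_hom f" "pol_hom g"
    and "\<And>v. v \<in> Poly_Mapping.keys m \<Longrightarrow> f (var v) - g (var v) \<in> ideal_gen G"
  shows "f (monom m) - g (monom m) \<in> ideal_gen G"
  unfolding monom_eq_eval_mon eval_mon_def pol_hom_prod[OF assms(1)] pol_hom_prod[OF assms(2)]
    pol_hom_power[OF assms(1)] pol_hom_power[OF assms(2)]
  by (intro ideal_gen_diff_prod ideal_gen_diff_power assms(3))

section \<open>Derivations\<close>

text \<open>The derivation with prescribed values G on the variables (no signs are needed over Z/2).\<close>

definition der_mon :: "(nat \<times> nat \<Rightarrow> pol) \<Rightarrow> mon \<Rightarrow> pol" where
  "der_mon G m = (\<Sum>v\<in>Poly_Mapping.keys m.
      of_nat (Poly_Mapping.lookup m v) * monom (m - Poly_Mapping.single v 1) * G v)"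

definition der :: "(nat \<times> nat \<Rightarrow> pol) \<Rightarrow> pol \<Rightarrow> pol" where
  "der G = lin_ext (der_mon G)"

lemma dd_eq_der: "dd n = der (dgen n)"
proof
  fix p
  have "dmon n m = der_mon (dgen n) m" for m
    unfolding dmon_def der_mon_def monom_def ..
  then show "dd n p = der (dgen n) p"
    unfolding dd_def der_def lin_ext_def by (intro sum.cong) (auto simp: in_keys_iff)
qed

lemma der_mon_superset:
  assumes "finite K" "Poly_Mapping.keys m \<subseteq> K"
  shows "der_mon G m = (\<Sum>v\<in>K. of_nat (Poly_Mapping.lookup m v) * monom (m - Poly_Mapping.single v 1) * G v)"
  unfolding der_mon_def
  by (rule sum.mono_neutral_left) (use assms in \<open>auto simp: in_keys_iff\<close>)

lemma of_nat_lookup_monom_diff_single: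
  "(of_nat (Poly_Mapping.lookup a v) :: pol) * monom (a + b - Poly_Mapping.single v 1)
   = of_nat (Poly_Mapping.lookup a v) * monom (a - Poly_Mapping.single v 1) * monom b"
proof (cases "Poly_Mapping.lookup a v = 0")
  case False
  have "a + b - Poly_Mapping.single v 1 = (a - Poly_Mapping.single v 1) + b"
    by (rule poly_mapping_eqI) (use False in \<open>auto simp: lookup_add lookup_minus lookup_single when_def\<close>)
  then show ?thesis by (simp add: monom_add mult.assoc)
qed simp

lemma der_mon_add: "der_mon G (a + b) = monom a * der_mon G b + der_mon G a * monom b"
proof -
  let ?K = "Poly_Mapping.keys a \<union> Poly_Mapping.keys b"
  let ?t = "\<lambda>m v. of_nat (Poly_Mapping.lookup m v) * monom (m - Poly_Mapping.single v 1) * G v"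
  have "?t (a + b) v = ?t a v * monom b + monom a * ?t b v" for v
  proof -
    have "?t (a + b) v = (of_nat (Poly_Mapping.lookup a v) * monom (a + b - Poly_Mapping.single v 1)
       + of_nat (Poly_Mapping.lookup b v) * monom (b + a - Poly_Mapping.single v 1)) * G v"
      unfolding lookup_add of_nat_add distrib_right by (simp only: add.commute[of b a])
    then show ?thesis
      unfolding of_nat_lookup_monom_diff_single by (simp add: algebra_simps)
  qed
  then have "der_mon G (a + b) = (\<Sum>v\<in>?K. ?t a v * monom b + monom a * ?t b v)"
    by (simp add: der_mon_superset[of ?K] keys_add_mon)
  also have "\<dots> = (\<Sum>v\<in>?K. ?t a v) * monom b + monom a * (\<Sum>v\<in>?K. ?t b v)"
    by (simp add: sum.distrib sum_distrib_left sum_distrib_right)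
  also have "\<dots> = monom a * der_mon G b + der_mon G a * monom b"
    by (simp add: der_mon_superset[of ?K] add.commute)
  finally show ?thesis .
qed

lemma der_add: "der G (p + q) = der G p + der G q"
  by (simp add: der_def lin_ext_add)

lemma der_0 [simp]: "der G 0 = 0"
  by (simp add: der_def)

lemma der_sum: "der G (sum g S) = (\<Sum>x\<in>S. der G (g x))"
  by (simp add: der_def lin_ext_sum)

lemma der_monom: "der G (monom m) = der_mon G m"
  by (simp add: der_def)

lemma der_mult: "der G (p * q) = p * der G q + der G p * q"
proof -
  have "der G (p * q) = (\<Sum>a\<in>Poly_Mapping.keys p. \<Sum>b\<in>Poly_Mapping.keys q.
      monom a * der_mon G b + der_mon G a * monom b)"
    unfolding der_def lin_ext_mult der_mon_add ..
  also have "\<dots> = (\<Sum>a\<in>Poly_Mapping.keys p. monom a) * (\<Sum>b\<in>Poly_Mapping.keys q. der_mon G b)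
      + (\<Sum>a\<in>Poly_Mapping.keys p. der_mon G a) * (\<Sum>b\<in>Poly_Mapping.keys q. monom b)"
    by (simp add: sum.distrib sum_product)
  also have "\<dots> = p * der G q + der G p * q"
    by (simp add: der_def lin_ext_def flip: pol_eq_sum_monom)
  finally show ?thesis .
qed

lemma der_var [simp]: "der G (var v) = G v"
  by (simp add: var_eq_monom der_monom der_mon_def monom_0)

lemma der_1 [simp]: "der G 1 = 0"
  by (simp flip: monom_0 add: der_monom der_mon_def)

lemma der_mult_derivation_eqI:
  assumes f: "pol_hom f"
    and "\<And>x y. D (x + y) = D x + D y" "\<And>x y. D' (x + y) = D' x + D' y"
    and "\<And>x y. D (x * y) = D x * f y + f x * D y" "\<And>x y. D' (x * y) = D' x * f y + f x * D' y"
    and "\<And>v. D (var v) = D' (var v)"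
  shows "D p = D' p"
proof -
  have "D 0 = 0" "D' 0 = 0" using assms(2)[of 0 0] assms(3)[of 0 0] by simp_all
  moreover have "D 1 = 0" "D' 1 = 0"
    using assms(4)[of 1 1] assms(5)[of 1 1] by (simp_all add: pol_hom_1[OF f])
  ultimately show ?thesis
    by (induction p rule: pol_induct) (simp_all only: assms(2-6))
qed

text \<open>Both sides are derivations along subst S, so they agree once they agree on variables.\<close>

lemma der_subst:
  assumes "\<And>v. der G (S v) = subst S (H v)"
  shows "der G (subst S p) = subst S (der H p)"
proof (rule der_mult_derivation_eqI[where D = "\<lambda>p. der G (subst S p)" and D' = "\<lambda>p. subst S (der H p)"])
  fix x y
  show "der G (subst S (x + y)) = der G (subst S x) + der G (subst S y)"
    "subst S (der H (x + y)) = subst S (der H x) + subst S (der H y)"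
    "der G (subst S (x * y)) = der G (subst S x) * subst S y + subst S x * der G (subst S y)"
    "subst S (der H (x * y)) = subst S (der H x) * subst S y + subst S x * subst S (der H y)"
    by (simp_all only: pol_hom_add[OF pol_hom_subst] pol_hom_mult[OF pol_hom_subst] der_add der_mult
        add.commute)
qed (simp_all add: assms pol_hom_subst)

lemma prev_0: "1 \<le> n \<Longrightarrow> prev n 0 = n - 1"
  by (simp add: prev_def)

lemma prev_pos: "1 \<le> j \<Longrightarrow> j < n \<Longrightarrow> prev n j = j - 1"
  by (simp add: prev_def)
    (metis Nat.add_diff_assoc2 add.commute mod_add_self2 mod_less less_imp_diff_less)

lemma sum_lessThan_prev: "(\<Sum>j<n. g (prev n j)) = (\<Sum>j<n. g j :: 'a::comm_monoid_add)"
proof (cases n)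
  case (Suc k)
  have "(\<Sum>j<Suc k. g (prev n j)) = g (prev n 0) + (\<Sum>j<k. g (prev n (Suc j)))"
    by (rule sum.lessThan_Suc_shift)
  also have "\<dots> = g k + (\<Sum>j<k. g j)"
    using Suc by (simp add: prev_0 prev_pos)
  finally show ?thesis using Suc by (simp add: add.commute)
qed simp

section \<open>The comparison map\<close>

context
  fixes n :: nat
  assumes n_pos: "1 \<le> n"
begin

abbreviation ID_gens :: "pol set" where
  "ID_gens \<equiv> {var v | v. v \<notin> gensD n} \<union> {var (s, j) ^ 2 | s j. n < s \<and> s \<le> 2 * n \<and> j < n}"

abbreviation JA_gens :: "pol set" where
  "JA_gens \<equiv> {var v | v. v \<notin> gensA n}
     \<union> {var (s, j) ^ 2 | s j. n < s \<and> s < 2 * n \<and> j < n}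
     \<union> {var (rho_var n) ^ 2}
     \<union> {var (n, j) ^ 2 - var (n, n - 1) ^ 2 | j. j < n}"

lemma ID_0: "0 \<in> ID n"
  unfolding ID_def by (rule ideal_gen_0)

lemma ID_add: "a \<in> ID n \<Longrightarrow> b \<in> ID n \<Longrightarrow> a + b \<in> ID n"
  unfolding ID_def by (rule ideal_gen_add)

lemma ID_mult_left: "a \<in> ID n \<Longrightarrow> r * a \<in> ID n"
  unfolding ID_def by (rule ideal_gen_mult_left)

lemma ID_mult_right: "a \<in> ID n \<Longrightarrow> a * r \<in> ID n"
  unfolding ID_def by (rule ideal_gen_mult_right)

lemma ID_sum: "(\<And>i. i \<in> I \<Longrightarrow> g i \<in> ID n) \<Longrightarrow> sum g I \<in> ID n"
  unfolding ID_def by (rule ideal_gen_sum)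

lemma ID_var: "v \<notin> gensD n \<Longrightarrow> var v \<in> ID n"
  unfolding ID_def by (rule ideal_gen_gen) blast

lemma ID_var_square: "n < s \<Longrightarrow> s \<le> 2 * n \<Longrightarrow> j < n \<Longrightarrow> var (s, j) ^ 2 \<in> ID n"
  unfolding ID_def by (rule ideal_gen_gen) blast

lemma JA_0: "0 \<in> JA n"
  unfolding JA_def by (rule ideal_gen_0)

lemma JA_add: "a \<in> JA n \<Longrightarrow> b \<in> JA n \<Longrightarrow> a + b \<in> JA n"
  unfolding JA_def by (rule ideal_gen_add)

lemma JA_mult_left: "a \<in> JA n \<Longrightarrow> r * a \<in> JA n"
  unfolding JA_def by (rule ideal_gen_mult_left)

lemma JA_mult_right: "a \<in> JA n \<Longrightarrow> a * r \<in> JA n"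
  unfolding JA_def by (rule ideal_gen_mult_right)

lemma JA_sum: "(\<And>i. i \<in> I \<Longrightarrow> g i \<in> JA n) \<Longrightarrow> sum g I \<in> JA n"
  unfolding JA_def by (rule ideal_gen_sum)

lemma JA_var: "v \<notin> gensA n \<Longrightarrow> var v \<in> JA n"
  unfolding JA_def by (rule ideal_gen_gen) blast

lemma JA_var_square: "n < s \<Longrightarrow> s < 2 * n \<Longrightarrow> j < n \<Longrightarrow> var (s, j) ^ 2 \<in> JA n"
  unfolding JA_def by (rule ideal_gen_gen) blast

lemma JA_rho_var_square: "var (rho_var n) ^ 2 \<in> JA n"
  unfolding JA_def by (rule ideal_gen_gen) blast

lemma JA_square_diff: "j < n \<Longrightarrow> var (n, j) ^ 2 - var (n, n - 1) ^ 2 \<in> JA n"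
  unfolding JA_def by (rule ideal_gen_gen) blast

definition vanishing :: "mon \<Rightarrow> bool" where
  "vanishing m \<longleftrightarrow> (\<exists>v\<in>Poly_Mapping.keys m. v \<notin> gensD n) \<or>
     (\<exists>s j. n < s \<and> s \<le> 2 * n \<and> j < n \<and> 2 \<le> Poly_Mapping.lookup m (s, j))"

lemma vanishing_add: "vanishing a \<Longrightarrow> vanishing (a + b)"
  unfolding vanishing_def keys_add_mon lookup_add by (meson UnI1 trans_le_add1)

lemma monom_in_ID: "vanishing m \<Longrightarrow> monom m \<in> ID n"
  unfolding vanishing_def
proof (elim disjE exE bexE conjE)
  fix v assume "v \<in> Poly_Mapping.keys m" "v \<notin> gensD n"
  then show "monom m \<in> ID n"
    using monom_split[of 1 m v] by (simp add: in_keys_iff ID_var ID_mult_left)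
next
  fix s j assume "n < s" "s \<le> 2 * n" "j < n" "2 \<le> Poly_Mapping.lookup m (s, j)"
  then show "monom m \<in> ID n"
    using monom_split[of 2 m "(s, j)"] by (simp add: ID_var_square ID_mult_left)
qed

lemma vanishing_of_ID_gen:
  assumes "g \<in> ID_gens"
  obtains g0 where "g = monom g0" "vanishing g0"
  using assms
proof (elim UnE CollectE exE conjE)
  fix v assume "g = var v" "v \<notin> gensD n"
  then show thesis
    by (intro that[of "Poly_Mapping.single v 1"]) (auto simp: var_eq_monom vanishing_def)
next
  fix s j assume "g = var (s, j) ^ 2" "n < s" "s \<le> 2 * n" "j < n"
  then show thesis
    by (intro that[of "Poly_Mapping.single (s, j) 2"]) (force simp: monom_single vanishing_def)+
qed

lemma ID_iff_vanishing: "p \<in> ID n \<longleftrightarrow> (\<forall>m\<in>Poly_Mapping.keys p. vanishing m)"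
proof
  assume "p \<in> ID n"
  then show "\<forall>m\<in>Poly_Mapping.keys p. vanishing m"
    unfolding ID_def
  proof (induction rule: ideal_gen_induct)
    case (add a b)
    then show ?case using keys_add[of a b] by blast
  next
    case (gen r g)
    then obtain g0 where "g = monom g0" "vanishing g0" by (rule vanishing_of_ID_gen)
    then show ?case
      using keys_mult[of r g] vanishing_add[of g0] by (auto simp: add.commute)
  qed simp
next
  assume "\<forall>m\<in>Poly_Mapping.keys p. vanishing m"
  then have "(\<Sum>m\<in>Poly_Mapping.keys p. monom m) \<in> ID n"
    by (intro ID_sum monom_in_ID) blast
  then show "p \<in> ID n" using pol_eq_sum_monom[of p] by simp
qed

definition hn :: "nat \<Rightarrow> pol" where
  "hn j = var (n, j)"

definition h2n :: "nat \<Rightarrow> pol" where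
  "h2n j = var (2 * n, j)"

definition rho :: pol where
  "rho = (\<Sum>j<n. h2n j)"

lemma sum_lessThan_n: "(\<Sum>j<n. g j) = g 0 + (\<Sum>j\<in>{1..<n}. g j :: 'a::comm_monoid_add)"
  using n_pos by (simp add: lessThan_atLeast0 sum.atLeast_Suc_lessThan)

lemma dd_add: "dd n (a + b) = dd n a + dd n b"
  and dd_mult: "dd n (a * b) = a * dd n b + dd n a * b"
  and dd_0 [simp]: "dd n 0 = 0"
  and dd_sum: "dd n (sum g S) = (\<Sum>i\<in>S. dd n (g i))"
  and dd_var: "dd n (var v) = dgen n v"
  by (simp_all add: dd_eq_der der_add der_mult der_sum)

lemma dd_hn: "dd n (hn j) = 0"
  using n_pos by (simp add: hn_def dd_var dgen_def)

lemma dd_h2n: "j < n \<Longrightarrow> dd n (h2n j) = hn (prev n j) ^ 2 + hn j ^ 2"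
  by (simp add: h2n_def hn_def dd_var dgen_def)

lemma dd_rho: "dd n rho = 0"
  unfolding rho_def dd_sum
  by (simp add: dd_h2n sum.distrib sum_lessThan_prev[where g = "\<lambda>j. hn j ^ 2"])

lemma rho_square_in_ID: "rho ^ 2 \<in> ID n"
  unfolding rho_def pol_square_sum h2n_def using n_pos by (intro ID_sum ID_var_square) auto

definition phi_var :: "nat \<times> nat \<Rightarrow> pol" where
  "phi_var v = (if v = rho_var n then rho else if v \<in> gensA n then var v else 0)"

definition phi :: "pol \<Rightarrow> pol" where
  "phi = subst phi_var"

lemma pol_hom_phi: "pol_hom phi"
  by (simp add: phi_def pol_hom_subst)

lemma rho_var_in_gensA: "rho_var n \<in> gensA n"
  using n_pos by (simp add: gensA_def)

lemma gensA_subset_gensD: "gensA n \<subseteq> gensD n"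
  using n_pos by (auto simp: gensA_def gensD_def rho_var_def)

lemma phi_var_gen: "n \<le> s \<Longrightarrow> s < 2 * n \<Longrightarrow> j < n \<Longrightarrow> phi (var (s, j)) = var (s, j)"
  by (simp add: phi_def phi_var_def rho_var_def gensA_def)

lemma phi_hn: "j < n \<Longrightarrow> phi (hn j) = hn j"
  using n_pos by (simp add: hn_def phi_var_gen)

lemma phi_rho_var: "phi (var (rho_var n)) = rho"
  by (simp add: phi_def phi_var_def)

lemma phi_var_not_gensA: "v \<notin> gensA n \<Longrightarrow> phi (var v) = 0"
  using rho_var_in_gensA by (auto simp: phi_def phi_var_def)

lemma dd_phi_var: "dd n (phi_var v) = 0"
  unfolding phi_var_def using n_pos
  by (auto simp: dd_rho dd_var dgen_def gensA_def rho_var_def)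

lemma dd_phi: "dd n (phi p) \<in> ID n"
proof (induction p rule: pol_induct)
  case (var v)
  then show ?case by (simp add: phi_def dd_phi_var ID_0)
next
  case (add x y)
  then show ?case by (simp add: pol_hom_add[OF pol_hom_phi] dd_add ID_add)
next
  case (mult x y)
  then show ?case by (simp add: pol_hom_mult[OF pol_hom_phi] dd_mult ID_add ID_mult_left ID_mult_right)
qed (simp_all add: pol_hom_0[OF pol_hom_phi] pol_hom_1[OF pol_hom_phi] dd_eq_der ID_0)

lemma BD_add: "a \<in> BD n \<Longrightarrow> b \<in> BD n \<Longrightarrow> a + b \<in> BD n"
proof -
  assume "a \<in> BD n" "b \<in> BD n"
  then obtain y1 i1 y2 i2 where "a = dd n y1 + i1" "i1 \<in> ID n" "b = dd n y2 + i2" "i2 \<in> ID n"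
    unfolding BD_def by auto
  then have "a + b = dd n (y1 + y2) + (i1 + i2)" "i1 + i2 \<in> ID n"
    by (simp_all add: dd_add ID_add algebra_simps)
  then show ?thesis unfolding BD_def by blast
qed

lemma ID_subset_BD: "i \<in> ID n \<Longrightarrow> i \<in> BD n"
  unfolding BD_def by (rule CollectI, rule exI[of _ 0], rule exI[of _ i]) simp

lemma dd_in_BD: "dd n w \<in> BD n"
  unfolding BD_def by (rule CollectI, rule exI[of _ w], rule exI[of _ 0]) (simp add: ID_0)

lemma cycle_mult_BD: "dd n c \<in> ID n \<Longrightarrow> b \<in> BD n \<Longrightarrow> c * b \<in> BD n"
proof -
  assume c: "dd n c \<in> ID n" and "b \<in> BD n"
  then obtain w i where b: "b = dd n w + i" "i \<in> ID n" unfolding BD_def by auto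
  have "c * b = dd n (c * w) + (dd n c * w + c * i)"
    by (simp add: b dd_mult algebra_simps)
  moreover have "dd n c * w + c * i \<in> ID n" using c b by (simp add: ID_add ID_mult_left ID_mult_right)
  ultimately show ?thesis unfolding BD_def by blast
qed

lemma hn_square_diff_eq_dd: "j < n \<Longrightarrow> hn j ^ 2 - hn (n - 1) ^ 2 = dd n (\<Sum>i\<in>{j+1..n-1}. h2n i)"
proof -
  assume j: "j < n"
  have "dd n (\<Sum>i\<in>{j+1..n-1}. h2n i) = (\<Sum>i\<in>{j+1..n-1}. hn (i - 1) ^ 2 + hn i ^ 2)"
    unfolding dd_sum by (rule sum.cong) (auto simp: dd_h2n prev_pos)
  also have "\<dots> = hn j ^ 2 + hn (n - 1) ^ 2"
    using j by (intro pol_sum_telescope) auto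
  finally show ?thesis by (simp add: pol_diff_eq_add)
qed

lemma phi_JA_gen_BD: "g \<in> JA_gens \<Longrightarrow> phi g \<in> BD n"
proof (elim UnE CollectE exE conjE insertE)
  fix v assume "g = var v" "v \<notin> gensA n"
  then show ?thesis by (simp add: phi_var_not_gensA ID_subset_BD ID_0)
next
  fix s j assume "g = var (s, j) ^ 2" "n < s" "s < 2 * n" "j < n"
  then show ?thesis
    by (simp add: pol_hom_power[OF pol_hom_phi] phi_var_gen ID_var_square ID_subset_BD)
next
  assume "g = var (rho_var n) ^ 2"
  then show ?thesis
    by (simp add: pol_hom_power[OF pol_hom_phi] phi_rho_var rho_square_in_ID ID_subset_BD)
next
  fix j assume g: "g = var (n, j) ^ 2 - var (n, n - 1) ^ 2" and j: "j < n"
  have "phi g = hn j ^ 2 - hn (n - 1) ^ 2"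
    using n_pos j by (simp add: g pol_diff_eq_add pol_hom_add[OF pol_hom_phi]
        pol_hom_power[OF pol_hom_phi] phi_hn flip: hn_def)
  then show ?thesis using hn_square_diff_eq_dd[OF j] dd_in_BD by simp
qed simp

lemma phi_JA_BD: "x \<in> JA n \<Longrightarrow> phi x \<in> BD n"
  unfolding JA_def
proof (induction rule: ideal_gen_induct)
  case zero
  then show ?case by (simp add: pol_hom_0[OF pol_hom_phi] ID_subset_BD ID_0)
next
  case (add a b)
  then show ?case by (simp add: pol_hom_add[OF pol_hom_phi] BD_add)
next
  case (gen r g)
  then show ?case by (simp add: pol_hom_mult[OF pol_hom_phi] cycle_mult_BD dd_phi phi_JA_gen_BD)
qed

section \<open>Injectivity\<close>

text \<open>On the algebra side the variable h_{2n,0} stands for rho_{2n}. The projection proj is linear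
  over polynomials free of the h_{2n,j}, which is what makes it send boundaries into JA.\<close>

definition top_free :: "mon \<Rightarrow> bool" where
  "top_free m \<longleftrightarrow> (\<forall>j<n. Poly_Mapping.lookup m (2 * n, j) = 0)"

definition top_reduced :: "mon \<Rightarrow> bool" where
  "top_reduced m \<longleftrightarrow> (\<forall>j. 1 \<le> j \<and> j < n \<longrightarrow> Poly_Mapping.lookup m (2 * n, j) = 0)
     \<and> Poly_Mapping.lookup m (2 * n, 0) \<le> 1"

definition proj :: "pol \<Rightarrow> pol" where
  "proj = lin_ext (\<lambda>m. if top_reduced m then monom m else 0)"

lemma proj_0 [simp]: "proj 0 = 0"
  by (simp add: proj_def)

lemma proj_add: "proj (a + b) = proj a + proj b"
  by (simp add: proj_def lin_ext_add)

lemma proj_sum: "proj (sum g S) = (\<Sum>i\<in>S. proj (g i))"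
  by (simp add: proj_def lin_ext_sum)

lemma proj_1: "proj 1 = 1"
  by (simp add: proj_def top_reduced_def flip: monom_0)

lemma proj_h2n: "j < n \<Longrightarrow> proj (h2n j) = (if j = 0 then h2n 0 else 0)"
  by (simp add: proj_def h2n_def var_eq_monom top_reduced_def lookup_single when_def)

lemma proj_rho: "proj rho = h2n 0"
  unfolding rho_def proj_sum using n_pos by (simp add: proj_h2n sum.delta)

lemma top_reduced_add_top_free: "top_free b \<Longrightarrow> top_reduced (b + c) = top_reduced c"
  using n_pos by (simp add: top_reduced_def top_free_def lookup_add)

lemma proj_monom_mult: "top_free b \<Longrightarrow> proj (monom b * q) = monom b * proj q"
  unfolding proj_def lin_ext_mult
  by (simp add: top_reduced_add_top_free monom_add lin_ext_def sum_distrib_left if_distrib cong: if_cong)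

lemma proj_mult_left:
  assumes "\<forall>b\<in>Poly_Mapping.keys f. top_free b"
  shows "proj (f * q) = f * proj q"
proof -
  have "proj (f * q) = (\<Sum>b\<in>Poly_Mapping.keys f. proj (monom b * q))"
    by (subst pol_eq_sum_monom[of f]) (simp add: sum_distrib_right proj_sum)
  also have "\<dots> = (\<Sum>b\<in>Poly_Mapping.keys f. monom b) * proj q"
    using assms by (simp add: proj_monom_mult sum_distrib_right)
  finally show ?thesis by (simp flip: pol_eq_sum_monom)
qed

lemma top_free_keys_hn_square: "\<forall>b\<in>Poly_Mapping.keys (hn i ^ 2). top_free b"
  using n_pos by (simp add: hn_def top_free_def lookup_single when_def flip: monom_single)

lemma top_free_keys_var: "v \<notin> gensD n \<Longrightarrow> \<forall>b\<in>Poly_Mapping.keys (var v). top_free b"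
  by (auto simp: var_eq_monom top_free_def lookup_single when_def gensD_def)

lemma proj_h2n_square_mult: "j < n \<Longrightarrow> proj (h2n j ^ 2 * q) = 0"
proof -
  assume j: "j < n"
  have "\<not> top_reduced (Poly_Mapping.single (2 * n, j) 2 + c)" for c
  proof
    assume "top_reduced (Poly_Mapping.single (2 * n, j) 2 + c)"
    moreover have "2 \<le> Poly_Mapping.lookup (Poly_Mapping.single (2 * n, j) 2 + c) (2 * n, j)"
      by (simp add: lookup_add)
    ultimately show False using j unfolding top_reduced_def by (cases "j = 0") force+
  qed
  then show ?thesis
    by (simp add: h2n_def proj_def lin_ext_mult flip: monom_single)
qed

lemma JA_hn_square_prev: "j < n \<Longrightarrow> hn (prev n j) ^ 2 + hn j ^ 2 \<in> JA n"
proof -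
  assume j: "j < n"
  have prev: "prev n j < n" using n_pos by (simp add: prev_def)
  have "hn (prev n j) ^ 2 + hn j ^ 2
      = (var (n, prev n j) ^ 2 - var (n, n - 1) ^ 2) + (var (n, j) ^ 2 - var (n, n - 1) ^ 2)"
    by (simp add: hn_def pol_diff_eq_add algebra_simps)
  then show ?thesis by (simp only:) (intro JA_add JA_square_diff prev j)
qed

lemma proj_mult_dgen: "proj (a * dgen n v) \<in> JA n"
proof (cases "fst v = 2 * n \<and> snd v < n")
  case True
  let ?f = "hn (prev n (snd v)) ^ 2 + hn (snd v) ^ 2"
  have "\<forall>b\<in>Poly_Mapping.keys ?f. top_free b"
    using keys_add[of "hn (prev n (snd v)) ^ 2" "hn (snd v) ^ 2"] top_free_keys_hn_square by blast
  then have "proj (?f * a) = ?f * proj a" by (rule proj_mult_left)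
  moreover have "dgen n v = ?f" using True by (simp add: dgen_def hn_def)
  ultimately show ?thesis using True by (simp add: mult.commute JA_mult_left JA_hn_square_prev)
next
  case False
  then have "dgen n v = 0" unfolding dgen_def by (rule if_not_P)
  then show ?thesis by (simp add: JA_0)
qed

lemma proj_dd: "proj (dd n y) \<in> JA n"
  unfolding dd_eq_der der_def lin_ext_def der_mon_def proj_sum
  by (intro JA_sum proj_mult_dgen)

lemma proj_ID: "i \<in> ID n \<Longrightarrow> proj i \<in> JA n"
  unfolding ID_def
proof (induction rule: ideal_gen_induct)
  case (add a b)
  then show ?case by (simp add: proj_add JA_add)
next
  case (gen r g)
  then consider v where "g = var v" "v \<notin> gensD n"
    | s j where "g = var (s, j) ^ 2" "n < s" "s < 2 * n" "j < n"
    | j where "g = h2n j ^ 2" "j < n"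
    by (auto simp: h2n_def) (metis le_neq_implies_less)
  then show ?case
  proof cases
    case 1
    then have "v \<notin> gensA n" using gensA_subset_gensD by blast
    then show ?thesis using 1
      by (simp add: mult.commute[of r] proj_mult_left top_free_keys_var JA_var JA_mult_right)
  next
    case 2
    then have "\<forall>b\<in>Poly_Mapping.keys g. top_free b"
      by (simp add: top_free_def lookup_single when_def flip: monom_single)
    then show ?thesis using 2
      by (simp add: mult.commute[of r] proj_mult_left JA_var_square JA_mult_right)
  next
    case 3
    then show ?thesis by (simp add: mult.commute[of r] proj_h2n_square_mult JA_0)
  qed
qed (simp add: JA_0)


lemma proj_rho_power: "proj (rho ^ k) = (if k = 0 then 1 else if k = 1 then h2n 0 else 0)"
proof (cases "2 \<le> k")
  case True
  then have "rho ^ k = rho ^ 2 * rho ^ (k - 2)" by (metis le_add_diff_inverse power_add)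
  also have "\<dots> = (\<Sum>j<n. h2n j ^ 2 * rho ^ (k - 2))"
    by (simp add: rho_def pol_square_sum sum_distrib_right)
  finally show ?thesis using True by (simp add: proj_sum proj_h2n_square_mult)
next
  case False
  then have "k = 0 \<or> k = 1" by auto
  then show ?thesis by (auto simp: proj_1 proj_rho)
qed

lemma phi_monom_not_gensA: "v \<in> Poly_Mapping.keys m \<Longrightarrow> v \<notin> gensA n \<Longrightarrow> phi (monom m) = 0"
  using monom_split[of 1 m v]
  by (simp add: in_keys_iff pol_hom_mult[OF pol_hom_phi] phi_var_not_gensA)

lemma monom_in_JA_not_gensA: "v \<in> Poly_Mapping.keys m \<Longrightarrow> v \<notin> gensA n \<Longrightarrow> monom m \<in> JA n"
  using monom_split[of 1 m v] by (simp add: in_keys_iff JA_var JA_mult_left)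

lemma phi_monom_fixed:
  assumes "\<And>v. v \<in> Poly_Mapping.keys m \<Longrightarrow> v \<in> gensA n \<and> v \<noteq> rho_var n"
  shows "phi (monom m) = monom m"
proof -
  have "eval_mon phi_var m = eval_mon var m"
    unfolding eval_mon_def by (rule prod.cong) (auto simp: phi_var_def dest: assms)
  then show ?thesis unfolding phi_def subst_monom by (simp add: monom_eq_eval_mon)
qed

lemma top_free_gensA:
  assumes "\<And>v. v \<in> Poly_Mapping.keys m \<Longrightarrow> v \<in> gensA n \<and> v \<noteq> rho_var n"
  shows "top_free m"
  unfolding top_free_def
proof (intro allI impI)
  fix j assume "j < n"
  show "Poly_Mapping.lookup m (2 * n, j) = 0"
  proof (rule ccontr)
    assume "Poly_Mapping.lookup m (2 * n, j) \<noteq> 0"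
    then show False using assms[of "(2 * n, j)"] by (auto simp: in_keys_iff gensA_def rho_var_def)
  qed
qed

lemma proj_phi_monom: "proj (phi (monom m)) + monom m \<in> JA n"
proof (cases "Poly_Mapping.keys m \<subseteq> gensA n")
  case False
  then obtain v where "v \<in> Poly_Mapping.keys m" "v \<notin> gensA n" by auto
  then show ?thesis by (simp add: phi_monom_not_gensA monom_in_JA_not_gensA)
next
  case True
  define k where "k = Poly_Mapping.lookup m (rho_var n)"
  define m0 where "m0 = m - Poly_Mapping.single (rho_var n) k"
  have m: "monom m = monom m0 * var (rho_var n) ^ k"
    using monom_split[of k m "rho_var n"] by (simp add: k_def m0_def)
  have m0: "v \<in> gensA n \<and> v \<noteq> rho_var n" if "v \<in> Poly_Mapping.keys m0" for v
    using that True
    by (auto simp: m0_def k_def in_keys_iff lookup_minus lookup_single when_def split: if_splits)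
  have proj_phi: "proj (phi (monom m)) = monom m0 * proj (rho ^ k)"
    by (simp add: m pol_hom_mult[OF pol_hom_phi] pol_hom_power[OF pol_hom_phi] phi_rho_var
        phi_monom_fixed[OF m0] proj_monom_mult top_free_gensA[OF m0])
  show ?thesis
  proof (cases "2 \<le> k")
    case True
    then have "var (rho_var n) ^ k = var (rho_var n) ^ (k - 2) * var (rho_var n) ^ 2"
      by (metis le_add_diff_inverse2 power_add)
    then have "monom m = (monom m0 * var (rho_var n) ^ (k - 2)) * var (rho_var n) ^ 2"
      by (simp only: m mult.assoc)
    then have "monom m \<in> JA n" by (simp add: JA_mult_left JA_rho_var_square)
    then show ?thesis using True by (simp add: proj_phi proj_rho_power)
  next
    case False
    then have "k = 0 \<or> k = 1" by auto
    then have "proj (phi (monom m)) = monom m"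
      unfolding proj_phi proj_rho_power by (auto simp: m h2n_def rho_var_def)
    then show ?thesis by (simp add: JA_0)
  qed
qed

lemma proj_phi: "proj (phi x) + x \<in> JA n"
proof -
  have "proj (phi x) + x = (\<Sum>m\<in>Poly_Mapping.keys x. proj (phi (monom m)) + monom m)"
    by (subst (1 2) pol_eq_sum_monom[of x]) (simp add: pol_hom_sum[OF pol_hom_phi] proj_sum sum.distrib)
  then show ?thesis by (simp add: JA_sum proj_phi_monom)
qed

lemma phi_BD_imp_JA:
  assumes "phi x \<in> BD n"
  shows "x \<in> JA n"
proof -
  obtain w i where "phi x = dd n w + i" "i \<in> ID n" using assms unfolding BD_def by auto
  then have "proj (phi x) \<in> JA n" by (simp add: proj_add JA_add proj_dd proj_ID)
  then have "(proj (phi x) + x) + proj (phi x) \<in> JA n" by (intro JA_add proj_phi)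
  moreover have "x = (proj (phi x) + x) + proj (phi x)" by (simp add: algebra_simps)
  ultimately show ?thesis by simp
qed


section \<open>Surjectivity\<close>

text \<open>coord is the substitution h_{n,0} -> h_{n,n-1}, h_{n,j} -> h_{n,j-1} + h_{n,j}, h_{2n,0} -> rho,
  with inverse coord_inv; it conjugates d to dsplit, the derivation h_{2n,j} -> h_{n,j}^2 (0 < j < n).\<close>

definition coord_var :: "nat \<times> nat \<Rightarrow> pol" where
  "coord_var v = (if fst v = n \<and> snd v = 0 then hn (n - 1)
     else if fst v = n \<and> 1 \<le> snd v \<and> snd v < n then hn (snd v - 1) + hn (snd v)
     else if v = (2 * n, 0) then rho else var v)"

definition coord_inv_var :: "nat \<times> nat \<Rightarrow> pol" where
  "coord_inv_var v = (if fst v = n \<and> snd v < n then hn 0 + (\<Sum>i\<in>{snd v + 1..<n}. hn i)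
     else if v = (2 * n, 0) then rho else var v)"

definition dsplit_var :: "nat \<times> nat \<Rightarrow> pol" where
  "dsplit_var v = (if fst v = 2 * n \<and> 1 \<le> snd v \<and> snd v < n then hn (snd v) ^ 2 else 0)"

definition coord :: "pol \<Rightarrow> pol" where
  "coord = subst coord_var"

definition coord_inv :: "pol \<Rightarrow> pol" where
  "coord_inv = subst coord_inv_var"

definition dsplit :: "pol \<Rightarrow> pol" where
  "dsplit = der dsplit_var"

lemma pol_hom_coord: "pol_hom coord"
  and pol_hom_coord_inv: "pol_hom coord_inv"
  by (simp_all add: coord_def coord_inv_def pol_hom_subst)

lemma coord_hn: "j < n \<Longrightarrow> coord (hn j) = (if j = 0 then hn (n - 1) else hn (j - 1) + hn j)"
  using n_pos by (simp add: coord_def hn_def coord_var_def)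

lemma coord_h2n: "coord (h2n j) = (if j = 0 then rho else h2n j)"
  using n_pos by (simp add: coord_def h2n_def coord_var_def)

lemma coord_rho: "coord rho = h2n 0"
  unfolding rho_def pol_hom_sum[OF pol_hom_coord] sum_lessThan_n[of "\<lambda>j. coord (h2n j)"]
  by (simp add: coord_h2n rho_def sum_lessThan_n[of h2n] algebra_simps)

lemma coord_inv_hn: "j < n \<Longrightarrow> coord_inv (hn j) = hn 0 + (\<Sum>i\<in>{j + 1..<n}. hn i)"
  by (simp add: coord_inv_def hn_def coord_inv_var_def)

lemma coord_coord_inv_hn: "j < n \<Longrightarrow> coord (coord_inv (hn j)) = hn j"
proof -
  assume j: "j < n"
  have "{j + 1..<n} = {j + 1..n - 1}" using n_pos by auto
  moreover have "coord (hn i) = hn (i - 1) + hn i" if "i \<in> {j + 1..n - 1}" for i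
    using that by (subst coord_hn) auto
  ultimately have "coord (coord_inv (hn j)) = hn (n - 1) + (\<Sum>i\<in>{j + 1..n - 1}. hn (i - 1) + hn i)"
    using j n_pos
    by (simp add: coord_inv_hn coord_hn pol_hom_add[OF pol_hom_coord] pol_hom_sum[OF pol_hom_coord])
  also have "\<dots> = hn j"
    using j by (subst pol_sum_telescope) (simp_all add: algebra_simps)
  finally show ?thesis .
qed

lemma coord_coord_inv_var: "coord (coord_inv_var v) = var v"
proof -
  obtain a b where v: "v = (a, b)" by force
  consider "a = n" "b < n" | "v = (2 * n, 0)" | "\<not> (a = n \<and> b < n)" "v \<noteq> (2 * n, 0)" by blast
  then show ?thesis
  proof cases
    case 1
    then show ?thesis using coord_coord_inv_hn[of b] v by (simp add: coord_inv_def hn_def)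
  next
    case 2
    then show ?thesis using n_pos by (simp add: coord_inv_var_def coord_rho h2n_def)
  next
    case 3
    then show ?thesis using v n_pos by (auto simp: coord_inv_var_def coord_def coord_var_def)
  qed
qed

lemma coord_coord_inv: "coord (coord_inv p) = p"
  unfolding coord_def coord_inv_def subst_subst
  using coord_coord_inv_var by (simp add: coord_def)

lemma dsplit_add: "dsplit (a + b) = dsplit a + dsplit b"
  and dsplit_sum: "dsplit (sum g S) = (\<Sum>i\<in>S. dsplit (g i))"
  and dsplit_0 [simp]: "dsplit 0 = 0"
  by (simp_all add: dsplit_def der_add der_sum)

lemma dsplit_hn: "dsplit (hn j) = 0"
  using n_pos by (simp add: dsplit_def hn_def dsplit_var_def)

lemma dsplit_h2n: "dsplit (h2n j) = (if 1 \<le> j \<and> j < n then hn j ^ 2 else 0)"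
  by (simp add: dsplit_def h2n_def dsplit_var_def)

lemma dd_coord_var: "dd n (coord_var v) = coord (dsplit_var v)"
proof -
  obtain a b where v: "v = (a, b)" by force
  consider "a = n \<and> b < n" | "a = 2 * n \<and> b = 0" | "a = 2 * n \<and> 1 \<le> b \<and> b < n"
    | "\<not> (a = n \<and> b < n)" "\<not> (a = 2 * n \<and> b < n)" by linarith
  then show ?thesis
  proof cases
    case 1
    then show ?thesis using n_pos v
      by (auto simp: coord_var_def dsplit_var_def dd_add dd_hn pol_hom_0[OF pol_hom_coord])
  next
    case 2
    then show ?thesis using n_pos v by (simp add: coord_var_def dsplit_var_def dd_rho pol_hom_0[OF pol_hom_coord])
  next
    case 3
    then show ?thesis using n_pos v
      by (simp add: coord_var_def dsplit_var_def dd_h2n prev_pos pol_hom_power[OF pol_hom_coord] coord_hn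
          pol_square_add flip: h2n_def)
  next
    case 4
    then show ?thesis using n_pos v
      by (auto simp: coord_var_def dsplit_var_def dd_var dgen_def pol_hom_0[OF pol_hom_coord])
  qed
qed

lemma dd_coord: "dd n (coord p) = coord (dsplit p)"
  unfolding dd_eq_der coord_def dsplit_def
  by (rule der_subst) (simp add: dd_coord_var[unfolded dd_eq_der coord_def])

lemma coord_inv_h2n: "coord_inv (h2n j) = (if j = 0 then rho else h2n j)"
  using n_pos by (simp add: coord_inv_def h2n_def coord_inv_var_def)

lemma dsplit_rho: "dsplit rho = (\<Sum>i\<in>{1..<n}. hn i ^ 2)"
  by (simp add: rho_def sum_lessThan_n dsplit_add dsplit_sum dsplit_h2n)

lemma dsplit_coord_inv_h2n: "j < n \<Longrightarrow> dsplit (coord_inv (h2n j)) = coord_inv (dd n (h2n j))"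
proof -
  assume j: "j < n"
  have ci: "pol_hom coord_inv" by (rule pol_hom_coord_inv)
  show ?thesis
  proof (cases "j = 0")
    case True
    have "dsplit (coord_inv (h2n j)) = (\<Sum>i\<in>{1..<n}. hn i ^ 2)"
      using True by (simp add: coord_inv_h2n dsplit_rho)
    also have "\<dots> = hn 0 ^ 2 + (hn 0 + (\<Sum>i\<in>{1..<n}. hn i)) ^ 2"
      by (simp add: pol_square_add pol_square_sum algebra_simps)
    also have "\<dots> = coord_inv (dd n (h2n j))"
      using True n_pos
      by (simp add: dd_h2n prev_0 pol_hom_add[OF ci] pol_hom_power[OF ci] coord_inv_hn add.commute)
    finally show ?thesis .
  next
    case False
    have "coord_inv (hn (j - 1)) = coord_inv (hn j) + hn j"
    proof -
      have "{j - 1 + 1..<n} = insert j {j + 1..<n}" using False j by auto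
      then show ?thesis using j by (simp add: coord_inv_hn algebra_simps)
    qed
    then have "coord_inv (dd n (h2n j)) = hn j ^ 2"
      using False j
      by (simp add: dd_h2n prev_pos pol_hom_add[OF ci] pol_hom_power[OF ci] pol_square_add algebra_simps)
    then show ?thesis using False j by (simp add: coord_inv_h2n dsplit_h2n)
  qed
qed

lemma dsplit_coord_inv_var: "dsplit (coord_inv_var v) = coord_inv (dgen n v)"
proof -
  obtain a b where v: "v = (a, b)" by force
  consider "a = n" "b < n" | "a = 2 * n" "b < n" | "\<not> (a = n \<and> b < n)" "\<not> (a = 2 * n \<and> b < n)"
    by force
  then show ?thesis
  proof cases
    case 1
    then show ?thesis using n_pos v
      by (simp add: coord_inv_var_def dgen_def dsplit_add dsplit_sum dsplit_hn
          pol_hom_0[OF pol_hom_coord_inv])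
  next
    case 2
    then show ?thesis using dsplit_coord_inv_h2n[of b] v
      by (simp add: coord_inv_def h2n_def dd_var)
  next
    case 3
    then show ?thesis using n_pos v
      by (auto simp: coord_inv_var_def dgen_def dsplit_def dsplit_var_def pol_hom_0[OF pol_hom_coord_inv])
  qed
qed

lemma dsplit_coord_inv: "dsplit (coord_inv p) = coord_inv (dd n p)"
  unfolding dd_eq_der coord_inv_def dsplit_def
  by (rule der_subst) (simp add: dsplit_coord_inv_var[unfolded dsplit_def coord_inv_def])


lemma subst_ID:
  assumes "\<And>v. v \<notin> gensD n \<Longrightarrow> F v = var v"
    and "\<And>s j. n < s \<Longrightarrow> s \<le> 2 * n \<Longrightarrow> j < n \<Longrightarrow> (s, j) \<noteq> (2 * n, 0) \<Longrightarrow> F (s, j) = var (s, j)"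
    and "F (2 * n, 0) = rho"
    and "i \<in> ID n"
  shows "subst F i \<in> ID n"
  using pol_hom_subst assms(4) unfolding ID_def
proof (rule pol_hom_ideal_gen)
  fix g assume "g \<in> ID_gens"
  then show "subst F g \<in> ideal_gen ID_gens"
  proof (elim UnE CollectE exE conjE)
    fix v assume "g = var v" "v \<notin> gensD n"
    then show ?thesis using assms(1) ID_var by (simp add: ID_def)
  next
    fix s j assume "g = var (s, j) ^ 2" "n < s" "s \<le> 2 * n" "j < n"
    then show ?thesis
      using assms(2,3) rho_square_in_ID ID_var_square
      by (cases "(s, j) = (2 * n, 0)") (auto simp: pol_hom_power[OF pol_hom_subst] ID_def)
  qed
qed

lemma coord_ID: "i \<in> ID n \<Longrightarrow> coord i \<in> ID n"
  unfolding coord_def using n_pos by (intro subst_ID) (auto simp: coord_var_def gensD_def)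

lemma coord_inv_ID: "i \<in> ID n \<Longrightarrow> coord_inv i \<in> ID n"
  unfolding coord_inv_def using n_pos by (intro subst_ID) (auto simp: coord_inv_var_def gensD_def)

text \<open>On monomials free of the h_{2n,j} with j > 0, coord factors through phi modulo ID.\<close>

definition lift_var :: "nat \<times> nat \<Rightarrow> pol" where
  "lift_var v = (if v = (2 * n, 0) then var v else coord_var v)"

definition lift :: "pol \<Rightarrow> pol" where
  "lift = subst lift_var"

lemma pol_hom_lift: "pol_hom lift"
  by (simp add: lift_def pol_hom_subst)

lemma coord_lift_var:
  assumes "\<not> (fst v = 2 * n \<and> 1 \<le> snd v \<and> snd v < n)"
  shows "coord (var v) + phi (lift (var v)) \<in> ID n"
proof -
  obtain a b where v: "v = (a, b)" by force
  consider "a = n \<and> b < n" | "v = (2 * n, 0)" | "\<not> (a = n \<and> b < n)" "\<not> (a = 2 * n \<and> b < n)"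
    using assms v by force
  then show ?thesis
  proof cases
    case 1
    then have "phi (lift (var v)) = coord (var v)"
      using v n_pos by (auto simp: lift_def lift_var_def coord_def coord_var_def
          pol_hom_add[OF pol_hom_phi] phi_hn)
    then show ?thesis by (simp add: ID_0)
  next
    case 2
    then show ?thesis
      using n_pos phi_rho_var by (simp add: lift_def lift_var_def coord_def coord_var_def rho_var_def ID_0)
  next
    case 3
    then have "coord (var v) = var v" "lift (var v) = var v"
      using v n_pos by (auto simp: coord_def coord_var_def lift_def lift_var_def)
    moreover have "phi (var v) = var v \<or> phi (var v) = 0 \<and> v \<notin> gensD n"
      using 3 v n_pos by (auto simp: phi_def phi_var_def gensA_def gensD_def rho_var_def)
    ultimately show ?thesis by (auto simp: ID_0 ID_var)
  qed
qed

definition unreduced_at :: "mon \<Rightarrow> nat \<Rightarrow> bool" where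
  "unreduced_at m j \<longleftrightarrow> 2 \<le> Poly_Mapping.lookup m (n, j) \<or> 1 \<le> Poly_Mapping.lookup m (2 * n, j)"

definition reduced :: "mon \<Rightarrow> bool" where
  "reduced m \<longleftrightarrow> (\<forall>j. 1 \<le> j \<and> j < n \<longrightarrow> \<not> unreduced_at m j)"

lemma coord_lift_reduced:
  assumes "reduced m"
  shows "coord (monom m) + phi (lift (monom m)) \<in> ID n"
proof -
  have "coord (var v) - (phi \<circ> lift) (var v) \<in> ideal_gen ID_gens" if "v \<in> Poly_Mapping.keys m" for v
  proof -
    have "\<not> (fst v = 2 * n \<and> 1 \<le> snd v \<and> snd v < n)"
      using assms that by (cases v) (auto simp: reduced_def unreduced_at_def in_keys_iff)
    then show ?thesis using coord_lift_var by (simp add: pol_diff_eq_add ID_def)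
  qed
  from pol_hom_monom_diff_ideal_gen[OF pol_hom_coord pol_hom_comp[OF pol_hom_phi pol_hom_lift] this]
  show ?thesis by (simp add: pol_diff_eq_add ID_def)
qed


text \<open>htpy trades h_{n,k}^2 for h_{2n,k} at the least 0 < k < n where the monomial is not reduced,
  unless h_{2n,k} already occurs: the contraction of P[x] (x) E[y], d y = x^2, onto E[x], applied
  in the first tensor factor that is not yet reduced.\<close>

definition to_square :: "mon \<Rightarrow> nat \<Rightarrow> mon" where
  "to_square m j = m - Poly_Mapping.single (2 * n, j) 1 + Poly_Mapping.single (n, j) 2"

definition to_top :: "mon \<Rightarrow> nat \<Rightarrow> mon" where
  "to_top m k = m - Poly_Mapping.single (n, k) 2 + Poly_Mapping.single (2 * n, k) 1"

definition odd_tops :: "mon \<Rightarrow> nat set" where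
  "odd_tops m = {j \<in> {1..<n}. odd (Poly_Mapping.lookup m (2 * n, j))}"

definition first_unreduced :: "mon \<Rightarrow> nat" where
  "first_unreduced m = (LEAST j. 1 \<le> j \<and> j < n \<and> unreduced_at m j)"

definition htpy_mon :: "mon \<Rightarrow> pol" where
  "htpy_mon m = (if reduced m then 0
     else if Poly_Mapping.lookup m (2 * n, first_unreduced m) = 0
     then monom (to_top m (first_unreduced m)) else 0)"

definition htpy :: "pol \<Rightarrow> pol" where
  "htpy = lin_ext htpy_mon"

definition reduce :: "pol \<Rightarrow> pol" where
  "reduce = lin_ext (\<lambda>m. if reduced m then monom m else 0)"

lemma finite_odd_tops: "finite (odd_tops m)"
  by (simp add: odd_tops_def)

lemma odd_tops_unreduced_at: "j \<in> odd_tops m \<Longrightarrow> 1 \<le> j \<and> j < n \<and> unreduced_at m j"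
  by (auto simp: odd_tops_def unreduced_at_def Suc_le_eq odd_pos)

lemma dsplit_monom: "dsplit (monom m) = (\<Sum>j\<in>odd_tops m. monom (to_square m j))"
proof -
  let ?t = "\<lambda>v. of_nat (Poly_Mapping.lookup m v) * monom (m - Poly_Mapping.single v 1) * dsplit_var v"
  let ?T = "(\<lambda>j. (2 * n, j)) ` {1..<n}"
  have "dsplit (monom m) = (\<Sum>v\<in>Poly_Mapping.keys m. ?t v)"
    by (simp add: dsplit_def der_monom der_mon_def)
  also have "\<dots> = (\<Sum>v\<in>Poly_Mapping.keys m \<union> ?T. ?t v)"
    by (rule sum.mono_neutral_left) (auto simp: in_keys_iff)
  also have "\<dots> = (\<Sum>v\<in>?T. ?t v)"
    by (rule sum.mono_neutral_right) (auto simp: dsplit_var_def)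
  also have "\<dots> = (\<Sum>j\<in>{1..<n}. ?t (2 * n, j))"
    by (subst sum.reindex) (auto simp: inj_on_def)
  also have "\<dots> = (\<Sum>j\<in>{1..<n}. if odd (Poly_Mapping.lookup m (2 * n, j)) then monom (to_square m j) else 0)"
    by (rule sum.cong)
      (auto simp: pol_of_nat dsplit_var_def hn_def to_square_def monom_add simp flip: monom_single)
  also have "\<dots> = (\<Sum>j\<in>odd_tops m. monom (to_square m j))"
    unfolding odd_tops_def by (rule sum.inter_filter[symmetric]) simp
  finally show ?thesis .
qed

lemma lookup_to_square: "Poly_Mapping.lookup (to_square m j) w =
    (if w = (2 * n, j) then Poly_Mapping.lookup m w - 1
     else if w = (n, j) then Poly_Mapping.lookup m w + 2 else Poly_Mapping.lookup m w)"
  using n_pos by (auto simp: to_square_def lookup_add lookup_minus lookup_single when_def)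

lemma lookup_to_top: "Poly_Mapping.lookup (to_top m k) w =
    (if w = (n, k) then Poly_Mapping.lookup m w - 2
     else if w = (2 * n, k) then Poly_Mapping.lookup m w + 1 else Poly_Mapping.lookup m w)"
  using n_pos by (auto simp: to_top_def lookup_add lookup_minus lookup_single when_def)

lemma to_top_to_square: "1 \<le> Poly_Mapping.lookup m (2 * n, j) \<Longrightarrow> to_top (to_square m j) j = m"
  using n_pos by (intro poly_mapping_eqI) (auto simp: lookup_to_top lookup_to_square)

lemma to_square_to_top: "2 \<le> Poly_Mapping.lookup m (n, k) \<Longrightarrow> to_square (to_top m k) k = m"
  using n_pos by (intro poly_mapping_eqI) (auto simp: lookup_to_top lookup_to_square)

lemma to_top_to_square_commute: "j \<noteq> k \<Longrightarrow> to_top (to_square m j) k = to_square (to_top m k) j"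
  using n_pos by (intro poly_mapping_eqI) (auto simp: lookup_to_top lookup_to_square)

lemma odd_tops_to_top:
  assumes "Poly_Mapping.lookup m (2 * n, k) = 0" "1 \<le> k" "k < n"
  shows "odd_tops (to_top m k) = insert k (odd_tops m)"
  using assms by (auto simp: odd_tops_def lookup_to_top)

lemma unreduced_at_to_square: "i \<noteq> j \<Longrightarrow> unreduced_at (to_square m j) i = unreduced_at m i"
  by (simp add: unreduced_at_def lookup_to_square)

lemma first_unreduced_eqI:
  assumes "1 \<le> k" "k < n" "unreduced_at m k" "\<And>i. 1 \<le> i \<Longrightarrow> i < k \<Longrightarrow> \<not> unreduced_at m i"
  shows "first_unreduced m = k"
  unfolding first_unreduced_def
  by (rule Least_equality) (use assms in \<open>auto simp: not_less[symmetric]\<close>)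

lemma first_unreduced:
  assumes "\<not> reduced m"
  shows "1 \<le> first_unreduced m" "first_unreduced m < n" "unreduced_at m (first_unreduced m)"
    "\<And>i. 1 \<le> i \<Longrightarrow> i < first_unreduced m \<Longrightarrow> \<not> unreduced_at m i"
proof -
  obtain j where "1 \<le> j \<and> j < n \<and> unreduced_at m j" using assms unfolding reduced_def by blast
  then have k: "1 \<le> first_unreduced m \<and> first_unreduced m < n \<and> unreduced_at m (first_unreduced m)"
    unfolding first_unreduced_def by (rule LeastI)
  then show "1 \<le> first_unreduced m" "first_unreduced m < n" "unreduced_at m (first_unreduced m)"
    by auto
  fix i assume "1 \<le> i" "i < first_unreduced m"
  then show "\<not> unreduced_at m i"
    using k not_less_Least[of i "\<lambda>j. 1 \<le> j \<and> j < n \<and> unreduced_at m j"]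
    unfolding first_unreduced_def by auto
qed

lemma first_unreduced_to_square:
  assumes "\<not> reduced m" "j \<in> odd_tops m"
  shows "\<not> reduced (to_square m j)" "first_unreduced (to_square m j) = first_unreduced m"
proof -
  let ?k = "first_unreduced m"
  note k = first_unreduced[OF assms(1)]
  have "?k \<le> j" using k(4)[of j] odd_tops_unreduced_at[OF assms(2)] by force
  have unred: "unreduced_at (to_square m j) ?k"
    using k(3) unreduced_at_to_square[of ?k j m] n_pos
    by (cases "?k = j") (auto simp: unreduced_at_def lookup_to_square)
  moreover have "\<not> unreduced_at (to_square m j) i" if "1 \<le> i" "i < ?k" for i
    using that k(4) \<open>?k \<le> j\<close> unreduced_at_to_square[of i j m] by auto
  ultimately show "first_unreduced (to_square m j) = ?k"
    using k(1,2) by (intro first_unreduced_eqI)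
  show "\<not> reduced (to_square m j)" using unred k(1,2) by (auto simp: reduced_def)
qed

lemma htpy_mon_to_square:
  assumes "\<not> reduced m" "j \<in> odd_tops m"
  shows "htpy_mon (to_square m j) =
    (if Poly_Mapping.lookup (to_square m j) (2 * n, first_unreduced m) = 0
     then monom (to_top (to_square m j) (first_unreduced m)) else 0)"
  using first_unreduced_to_square[OF assms] by (simp add: htpy_mon_def)

lemma htpy_mon_to_square_other:
  assumes "\<not> reduced m" "j \<in> odd_tops m" "j \<noteq> first_unreduced m"
  shows "htpy_mon (to_square m j) = (if Poly_Mapping.lookup m (2 * n, first_unreduced m) = 0
    then monom (to_square (to_top m (first_unreduced m)) j) else 0)"
  using assms by (simp add: htpy_mon_to_square lookup_to_square to_top_to_square_commute)

lemma htpy_mon_to_square_first: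
  assumes "\<not> reduced m" "first_unreduced m \<in> odd_tops m"
  shows "htpy_mon (to_square m (first_unreduced m)) =
    (if Poly_Mapping.lookup m (2 * n, first_unreduced m) = 1 then monom m else 0)"
proof -
  have "odd (Poly_Mapping.lookup m (2 * n, first_unreduced m))" using assms(2) by (simp add: odd_tops_def)
  then have "1 \<le> Poly_Mapping.lookup m (2 * n, first_unreduced m)" by (simp add: Suc_le_eq odd_pos)
  then show ?thesis using assms by (auto simp: htpy_mon_to_square lookup_to_square to_top_to_square)
qed

lemma htpy_monom: "htpy (monom m) = htpy_mon m"
  and htpy_dsplit_monom: "htpy (dsplit (monom m)) = (\<Sum>j\<in>odd_tops m. htpy_mon (to_square m j))"
  and reduce_monom: "reduce (monom m) = (if reduced m then monom m else 0)"
  by (simp_all add: htpy_def reduce_def dsplit_monom lin_ext_sum)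

lemma htpy_identity_reduced:
  assumes "reduced m"
  shows "dsplit (htpy (monom m)) + htpy (dsplit (monom m)) + monom m + reduce (monom m) = 0"
proof -
  have "odd_tops m = {}"
    using assms odd_tops_unreduced_at by (auto simp: reduced_def)
  then show ?thesis using assms by (simp add: htpy_monom htpy_dsplit_monom reduce_monom htpy_mon_def)
qed

lemma htpy_identity_free:
  assumes "\<not> reduced m" "Poly_Mapping.lookup m (2 * n, first_unreduced m) = 0"
  shows "dsplit (htpy (monom m)) + htpy (dsplit (monom m)) + monom m + reduce (monom m) = 0"
proof -
  define k where "k = first_unreduced m"
  note k = first_unreduced[OF assms(1), folded k_def]
  have y: "Poly_Mapping.lookup m (2 * n, k) = 0" using assms(2) by (simp add: k_def)
  have x: "2 \<le> Poly_Mapping.lookup m (n, k)" using k(3) y by (simp add: unreduced_at_def)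
  have kJ: "k \<notin> odd_tops m" using y by (simp add: odd_tops_def)
  have "dsplit (htpy (monom m)) = monom m + (\<Sum>j\<in>odd_tops m. monom (to_square (to_top m k) j))"
    using assms kJ
    by (simp add: htpy_monom htpy_mon_def dsplit_monom odd_tops_to_top[OF y k(1,2)]
        to_square_to_top[OF x] finite_odd_tops flip: k_def)
  moreover have "htpy_mon (to_square m j) = monom (to_square (to_top m k) j)" if "j \<in> odd_tops m" for j
    using htpy_mon_to_square_other[OF assms(1) that] that kJ y by (auto simp: k_def)
  then have "htpy (dsplit (monom m)) = (\<Sum>j\<in>odd_tops m. monom (to_square (to_top m k) j))"
    by (simp add: htpy_dsplit_monom)
  ultimately show ?thesis using assms(1) by (simp add: reduce_monom algebra_simps)
qed

lemma htpy_identity_top: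
  assumes "\<not> reduced m" "Poly_Mapping.lookup m (2 * n, first_unreduced m) \<noteq> 0"
  shows "dsplit (htpy (monom m)) + htpy (dsplit (monom m)) + monom m + reduce (monom m) \<in> ID n"
proof -
  define k where "k = first_unreduced m"
  note k = first_unreduced[OF assms(1), folded k_def]
  have y: "Poly_Mapping.lookup m (2 * n, k) \<noteq> 0" using assms(2) by (simp add: k_def)
  have "htpy_mon (to_square m j) = (if j = k then htpy_mon (to_square m k) else 0)"
    if "j \<in> odd_tops m" for j
    using htpy_mon_to_square_other[OF assms(1) that] y by (auto simp: k_def)
  then have "htpy (dsplit (monom m)) = (\<Sum>j\<in>odd_tops m. if j = k then htpy_mon (to_square m k) else 0)"
    by (simp add: htpy_dsplit_monom)
  also have "\<dots> = (if Poly_Mapping.lookup m (2 * n, k) = 1 then monom m else 0)"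
    using assms(1) k(1,2) by (auto simp: finite_odd_tops htpy_mon_to_square_first k_def odd_tops_def)
  finally have "htpy (dsplit (monom m)) = \<dots>" .
  moreover have "htpy (monom m) = 0" using assms by (simp add: htpy_monom htpy_mon_def)
  moreover have "vanishing m" if "Poly_Mapping.lookup m (2 * n, k) \<noteq> 1"
    unfolding vanishing_def using that y k(2) n_pos
    by (intro disjI2 exI[of _ "2 * n"] exI[of _ k]) auto
  ultimately show ?thesis using assms(1) by (auto simp: reduce_monom ID_0 monom_in_ID)
qed

lemma htpy_sum: "htpy (sum g S) = (\<Sum>x\<in>S. htpy (g x))"
  and reduce_sum: "reduce (sum g S) = (\<Sum>x\<in>S. reduce (g x))"
  by (simp_all add: htpy_def reduce_def lin_ext_sum)

lemma htpy_identity_monom: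
  "dsplit (htpy (monom m)) + htpy (dsplit (monom m)) + monom m + reduce (monom m) \<in> ID n"
proof (cases "reduced m")
  case True
  then show ?thesis by (simp add: htpy_identity_reduced ID_0)
next
  case False
  then show ?thesis using htpy_identity_free[OF False] htpy_identity_top[OF False]
    by (cases "Poly_Mapping.lookup m (2 * n, first_unreduced m) = 0") (simp_all add: ID_0)
qed

lemma htpy_identity: "dsplit (htpy p) + htpy (dsplit p) + p + reduce p \<in> ID n"
proof -
  let ?p = "\<Sum>m\<in>Poly_Mapping.keys p. monom m"
  have "dsplit (htpy ?p) + htpy (dsplit ?p) + ?p + reduce ?p = (\<Sum>m\<in>Poly_Mapping.keys p.
      dsplit (htpy (monom m)) + htpy (dsplit (monom m)) + monom m + reduce (monom m))"
    by (simp only: htpy_sum reduce_sum dsplit_sum sum.distrib)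
  also have "\<dots> \<in> ID n" by (intro ID_sum htpy_identity_monom)
  finally show ?thesis by (simp only: pol_eq_sum_monom[of p, symmetric])
qed

lemma vanishing_to_top:
  assumes "vanishing m" "\<not> reduced m" "Poly_Mapping.lookup m (2 * n, first_unreduced m) = 0"
  shows "vanishing (to_top m (first_unreduced m))"
proof -
  let ?k = "first_unreduced m"
  have k: "?k < n" by (rule first_unreduced(2)[OF assms(2)])
  show ?thesis
    using assms(1)[unfolded vanishing_def]
  proof (elim disjE bexE exE conjE)
    fix v assume v: "v \<in> Poly_Mapping.keys m" "v \<notin> gensD n"
    then have "v \<noteq> (n, ?k)" "v \<noteq> (2 * n, ?k)" using k by (auto simp: gensD_def)
    then have "v \<in> Poly_Mapping.keys (to_top m ?k)" using v(1) by (simp add: in_keys_iff lookup_to_top)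
    then show ?thesis using v(2) unfolding vanishing_def by blast
  next
    fix s j assume h: "n < s" "s \<le> 2 * n" "j < n" "2 \<le> Poly_Mapping.lookup m (s, j)"
    then have "(s, j) \<noteq> (n, ?k)" "(s, j) \<noteq> (2 * n, ?k)" using assms(3) by auto
    then have "Poly_Mapping.lookup (to_top m ?k) (s, j) = Poly_Mapping.lookup m (s, j)"
      by (simp only: lookup_to_top if_False)
    then have "2 \<le> Poly_Mapping.lookup (to_top m ?k) (s, j)" using h(4) by simp
    then show ?thesis using h(1-3) unfolding vanishing_def by blast
  qed
qed

lemma htpy_ID:
  assumes "i \<in> ID n"
  shows "htpy i \<in> ID n"
proof -
  have "htpy_mon m \<in> ID n" if "vanishing m" for m
    using vanishing_to_top[OF that] by (auto simp: htpy_mon_def ID_0 monom_in_ID)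
  then show ?thesis
    using assms unfolding ID_iff_vanishing[of i] htpy_def lin_ext_def by (simp add: ID_sum)
qed

lemma coord_reduce_lift: "coord (reduce z) + phi (lift (reduce z)) \<in> ID n"
proof -
  have "coord (reduce z) + phi (lift (reduce z)) = (\<Sum>m\<in>Poly_Mapping.keys z.
      if reduced m then coord (monom m) + phi (lift (monom m)) else 0)"
    by (simp add: reduce_def lin_ext_def pol_hom_sum[OF pol_hom_coord] pol_hom_sum[OF pol_hom_lift]
        pol_hom_sum[OF pol_hom_phi] sum.distrib[symmetric] if_distrib pol_hom_0[OF pol_hom_coord]
        pol_hom_0[OF pol_hom_lift] pol_hom_0[OF pol_hom_phi] cong: if_cong)
  also have "\<dots> \<in> ID n" by (intro ID_sum) (auto simp: coord_lift_reduced ID_0)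
  finally show ?thesis .
qed

text \<open>For a cycle z and w = coord_inv z, the homotopy identity gives w = reduce w + dsplit (htpy w)
  modulo ID, hence z = coord (reduce w) + d (coord (htpy w)) modulo ID.\<close>

lemma surj_mod_BD:
  assumes "dd n z \<in> ID n"
  shows "phi (lift (reduce (coord_inv z))) - z \<in> BD n"
proof -
  define w where "w = coord_inv z"
  have "htpy (dsplit w) \<in> ID n"
    unfolding w_def dsplit_coord_inv by (intro htpy_ID coord_inv_ID assms)
  then have "(dsplit (htpy w) + htpy (dsplit w) + w + reduce w) + htpy (dsplit w) \<in> ID n"
    by (intro ID_add htpy_identity)
  then have "coord (w + reduce w + dsplit (htpy w)) \<in> ID n"
    by (intro coord_ID) (simp add: algebra_simps)
  then have "z + coord (reduce w) + dd n (coord (htpy w)) \<in> ID n"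
    by (simp add: pol_hom_add[OF pol_hom_coord] w_def coord_coord_inv dd_coord)
  then have "(z + coord (reduce w) + dd n (coord (htpy w))) + (coord (reduce w) + phi (lift (reduce w)))
      \<in> ID n"
    by (rule ID_add[OF _ coord_reduce_lift])
  moreover have "phi (lift (reduce w)) - z = dd n (coord (htpy w)) +
      ((z + coord (reduce w) + dd n (coord (htpy w))) + (coord (reduce w) + phi (lift (reduce w))))"
    by (simp add: pol_diff_eq_add algebra_simps)
  ultimately show ?thesis unfolding BD_def w_def by blast
qed

end

theorem lemma5p2:
  fixes n :: nat
  assumes "n \<ge> 1"
  shows "\<exists>\<phi>. E2_iso n \<phi>"
proof
  have hom: "pol_hom (phi n)" using assms by (rule pol_hom_phi)
  show "E2_iso n (phi n)"
    unfolding E2_iso_def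
  proof (intro conjI allI impI iffI ballI)
    show "phi n (var (rho_var n)) = (\<Sum>j<n. var (2 * n, j))"
      using assms by (simp add: phi_rho_var rho_def h2n_def)
  next
    fix z assume "z \<in> ZD n"
    then show "\<exists>x. phi n x - z \<in> BD n" using assms surj_mod_BD by (auto simp: ZD_def)
  qed (use assms hom in \<open>auto simp: pol_hom_add pol_hom_mult pol_hom_1 phi_var_gen ZD_def dd_phi
      phi_BD_imp_JA phi_JA_BD\<close>)
qed

end
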